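(* For every $0<p<2$ there exist a separable Hilbert space $\mathcal{H}$, a finite collection $\mathcal{A}$ of observables on $\mathcal{H}$, and states $\rho,\tau,\omega\in\mathcal{S}(\mathcal{H})$ such that $$d_{\mathcal{A},p}(\rho,\omega)>d_{\mathcal{A},p}(\rho,\tau)+d_{\mathcal{A},p}(\tau,\omega).$$
   Context: For a Hilbert space $\mathcal{H}$, $\mathcal{S}(\mathcal{H})$ is the set of positive trace-class operators with unit trace (states); observables are self-adjoint operators. For an operator $A$ on $\mathcal{H}$, $A^T$ is the operator on the dual $\mathcal{H}^*$ given by $(A^T\eta)(\varphi)=\eta(A\varphi)$. Couplings: $\mathcal{C}(\rho,\omega)=\{\Pi\in\mathcal{S}(\mathcal{H}\otimes\mathcal{H}^* ): \mathrm{tr}_{\mathcal{H}^*}[\Pi]=\omega,\ \mathrm{tr}_{\mathcal{H}}[\Pi]=\rho^T\}$. For a finite collection $\mathcal{A}=\{A_1,\dots,A_K\}$ of observables and $0<p<\infty$, $C_{\mathcal{A},p}=\sum_{k=1}^K|A_k\otimes I^T-I\otimes A_k^T|^p$, $D_{\mathcal{A},p}(\rho,\omega)=\big(\inf_{\Pi\in\mathcal{C}(\rho,\omega)}\mathrm{tr}[\Pi C_{\mathcal{A},p}]\big)^{\min\{1/p,1\}}$, and $$d_{\mathcal{A},p}(\rho,\omega)=\Big(D_{\mathcal{A},p}^{\max\{p,1\}}(\rho,\omega)-\tfrac12\big(D_{\mathcal{A},p}^{\max\{p,1\}}(\rho,\rho)+D_{\mathcal{A},p}^{\max\{p,1\}}(\omega,\omega)\big)\Big)^{\min\{1/p,1\}}.$$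 *)

theory Defs
  imports "HOL-Analysis.Analysis" "Jordan_Normal_Form.Matrix"
begin

text \<open>Finite-dimensional model: the Hilbert space is C^n with its standard basis;
  operators are complex n x n matrices (JNF type mat).  The dual space H* is
  identified with C^n via the dual basis, in which the matrix of A^T is the
  transpose of the matrix of A.  H (x) H* is C^(n*n) with the Kronecker
  ordering: index i*n+j corresponds to e_i (x) e_j^*.\<close>

definition cadj :: "complex mat \<Rightarrow> complex mat" where
  "cadj A = mat (dim_col A) (dim_row A) (\<lambda>(i,j). cnj (A $$ (j,i)))"

definition mtrace :: "complex mat \<Rightarrow> complex" where
  "mtrace A = (\<Sum>i<dim_row A. A $$ (i,i))"

definition cinner :: "complex vec \<Rightarrow> complex vec \<Rightarrow> complex" where
  "cinner v w = (\<Sum>i<dim_vec v. cnj (v $ i) * w $ i)"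

definition self_adjoint :: "nat \<Rightarrow> complex mat \<Rightarrow> bool" where
  "self_adjoint n A \<longleftrightarrow> A \<in> carrier_mat n n \<and> cadj A = A"

definition positive_op :: "nat \<Rightarrow> complex mat \<Rightarrow> bool" where
  "positive_op n A \<longleftrightarrow> self_adjoint n A \<and>
     (\<forall>v \<in> carrier_vec n. 0 \<le> Re (cinner v (A *\<^sub>v v)))"

definition is_state :: "nat \<Rightarrow> complex mat \<Rightarrow> bool" where
  "is_state n \<rho> \<longleftrightarrow> positive_op n \<rho> \<and> mtrace \<rho> = 1"

definition unitary_mat :: "nat \<Rightarrow> complex mat \<Rightarrow> bool" where
  "unitary_mat n U \<longleftrightarrow> U \<in> carrier_mat n n \<and> cadj U * U = 1\<^sub>m n"

text \<open>Functional calculus |A|^p for a self-adjoint A, via a spectral decomposition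
  A = U diag(d) U^*.  (Well defined for self-adjoint A; 0 powr p = 0.)\<close>
definition abs_powr :: "nat \<Rightarrow> complex mat \<Rightarrow> real \<Rightarrow> complex mat" where
  "abs_powr n A p = (SOME B. \<exists>U d. unitary_mat n U \<and>
      A = U * mat_diag n (\<lambda>i. complex_of_real (d i)) * cadj U \<and>
      B = U * mat_diag n (\<lambda>i. complex_of_real (\<bar>d i\<bar> powr p)) * cadj U)"

definition kron :: "complex mat \<Rightarrow> complex mat \<Rightarrow> complex mat" where
  "kron A B = mat (dim_row A * dim_row B) (dim_col A * dim_col B)
     (\<lambda>(i,j). A $$ (i div dim_row B, j div dim_col B) * B $$ (i mod dim_row B, j mod dim_col B))"

definition ptrace_dual :: "nat \<Rightarrow> complex mat \<Rightarrow> complex mat" where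
  "ptrace_dual n P = mat n n (\<lambda>(i,j). \<Sum>k<n. P $$ (i*n+k, j*n+k))"

definition ptrace_primal :: "nat \<Rightarrow> complex mat \<Rightarrow> complex mat" where
  "ptrace_primal n P = mat n n (\<lambda>(i,j). \<Sum>k<n. P $$ (k*n+i, k*n+j))"

definition couplings :: "nat \<Rightarrow> complex mat \<Rightarrow> complex mat \<Rightarrow> complex mat set" where
  "couplings n \<rho> \<omega> = {P. is_state (n*n) P \<and> ptrace_dual n P = \<omega>
                           \<and> ptrace_primal n P = transpose_mat \<rho>}"

definition cost_op :: "nat \<Rightarrow> complex mat list \<Rightarrow> real \<Rightarrow> complex mat" where
  "cost_op n As p = foldr (\<lambda>A C. abs_powr (n*n)
       (kron A (transpose_mat (1\<^sub>m n)) - kron (1\<^sub>m n) (transpose_mat A)) p + C)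
     As (0\<^sub>m (n*n) (n*n))"

definition D_qot :: "nat \<Rightarrow> complex mat list \<Rightarrow> real \<Rightarrow> complex mat \<Rightarrow> complex mat \<Rightarrow> real" where
  "D_qot n As p \<rho> \<omega> =
     (Inf {Re (mtrace (P * cost_op n As p)) | P. P \<in> couplings n \<rho> \<omega>}) powr (min (1/p) 1)"

definition d_qot :: "nat \<Rightarrow> complex mat list \<Rightarrow> real \<Rightarrow> complex mat \<Rightarrow> complex mat \<Rightarrow> real" where
  "d_qot n As p \<rho> \<omega> =
     (D_qot n As p \<rho> \<omega> powr (max p 1)
       - 1/2 * (D_qot n As p \<rho> \<rho> powr (max p 1) + D_qot n As p \<omega> \<omega> powr (max p 1)))
     powr (min (1/p) 1)"

end

theory Submission
  imports Defs
begin

(* Take H = C^2 and the single observable A = |1><1|.  Then A (x) I^T - I (x) A^T = diag(0,-1,1,0)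
  is tripotent, so for every p the cost C_{A,p} = diag(0,1,1,0) is the projection onto the pairs of
  different measurement outcomes, and the exponents in D and d make D^max(p,1) the optimal cost W
  itself.  For the states |0>, |1> and |+> = (|0> + |1>)/sqrt 2, product couplings are optimal in
  W(0,1) = 1, W(0,0) = W(1,1) = 0 and W(0,+) = W(+,1) = 1/2 by the classical marginal bound
  |<0|omega|0> - <0|rho|0>|, while W(+,+) = 1/2 because positivity of the coupling forbids
  concentrating it on matching outcomes.  Hence d(0,1) = 1 but d(0,+) = d(+,1) = (1/4)^min(1/p,1),
  which is below 1/2 exactly when p < 2. *)

lemma cadj_carrier_mat: "A \<in> carrier_mat n m \<Longrightarrow> cadj A \<in> carrier_mat m n"
  by (auto simp: cadj_def)

lemma cadj_one_mat: "cadj (1\<^sub>m n) = 1\<^sub>m n"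
  by (rule eq_matI) (auto simp: cadj_def)

lemma one_smult_mat [simp]: "1 \<cdot>\<^sub>m A = (A :: 'a :: monoid_mult mat)"
  by (rule eq_matI) auto

lemma mtrace_transpose: "mtrace (transpose_mat A) = mtrace A" if "A \<in> carrier_mat n n"
  using that by (simp add: mtrace_def)

lemma mult_add_less_mult:
  fixes i k m n :: nat
  assumes "i < m" "k < n"
  shows "i * n + k < m * n"
proof -
  have "i * n + k < Suc i * n" using assms(2) by simp
  also have "\<dots> \<le> m * n" using assms(1) by (intro mult_le_mono1) simp
  finally show ?thesis .
qed

lemma unitary_conj_mult:
  assumes U: "unitary_mat n U" and "X \<in> carrier_mat n n" "Y \<in> carrier_mat n n"
  shows "U * X * cadj U * (U * Y * cadj U) = U * (X * Y) * cadj U"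
proof -
  have Uc: "U \<in> carrier_mat n n" and UU: "cadj U * U = 1\<^sub>m n"
    using U by (auto simp: unitary_mat_def)
  have "U * X * cadj U * (U * Y * cadj U) = U * X * (cadj U * U) * Y * cadj U"
    using assms Uc cadj_carrier_mat[OF Uc] by (simp add: assoc_mult_mat[of _ n n _ n _ n])
  with assms Uc UU show ?thesis by (simp add: assoc_mult_mat[of _ n n _ n _ n])
qed

lemma unitary_conj_cancel:
  assumes U: "unitary_mat n U" and "X \<in> carrier_mat n n"
  shows "cadj U * (U * X * cadj U) * U = X"
proof -
  have Uc: "U \<in> carrier_mat n n" and UU: "cadj U * U = 1\<^sub>m n"
    using U by (auto simp: unitary_mat_def)
  have "cadj U * (U * X * cadj U) * U = (cadj U * U) * X * (cadj U * U)"
    using assms Uc cadj_carrier_mat[OF Uc] by (simp add: assoc_mult_mat[of _ n n _ n _ n])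
  with assms UU show ?thesis by simp
qed

lemma abs_powr_spectral:
  assumes "unitary_mat n V" "A = V * mat_diag n (\<lambda>i. complex_of_real (e i)) * cadj V"
  obtains U d where "unitary_mat n U" "A = U * mat_diag n (\<lambda>i. complex_of_real (d i)) * cadj U"
    "abs_powr n A p = U * mat_diag n (\<lambda>i. complex_of_real (\<bar>d i\<bar> powr p)) * cadj U"
proof -
  let ?spectral = "\<lambda>B. \<exists>U d. unitary_mat n U \<and>
      A = U * mat_diag n (\<lambda>i. complex_of_real (d i)) * cadj U \<and>
      B = U * mat_diag n (\<lambda>i. complex_of_real (\<bar>d i\<bar> powr p)) * cadj U"
  have "?spectral (V * mat_diag n (\<lambda>i. complex_of_real (\<bar>e i\<bar> powr p)) * cadj V)"
    using assms by blast
  then have "?spectral (abs_powr n A p)"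
    unfolding abs_powr_def by (rule someI)
  with that show ?thesis by blast
qed

(* A^3 = A forces the spectrum into {-1, 0, 1}; as 0 powr p = 0, this gives |A|^p = A^2
  for every p. *)
lemma abs_powr_tripotent:
  assumes "unitary_mat n V" "A = V * mat_diag n (\<lambda>i. complex_of_real (e i)) * cadj V"
    and tripotent: "A * A * A = A"
  shows "abs_powr n A p = A * A"
proof -
  obtain U d where U: "unitary_mat n U" and A: "A = U * mat_diag n (\<lambda>i. complex_of_real (d i)) * cadj U"
    and abs: "abs_powr n A p = U * mat_diag n (\<lambda>i. complex_of_real (\<bar>d i\<bar> powr p)) * cadj U"
    using abs_powr_spectral[OF assms(1,2)] by blast
  define D where "D = mat_diag n (\<lambda>i. complex_of_real (d i))"
  have D: "D \<in> carrier_mat n n" by (simp add: D_def)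
  have square: "A * A = U * (D * D) * cadj U"
    unfolding A D_def[symmetric] by (rule unitary_conj_mult[OF U D D])
  have "A * A * A = U * (D * D * D) * cadj U"
    unfolding square by (subst A) (simp add: D_def unitary_conj_mult[OF U])
  then have "D * D * D = D"
    using tripotent unitary_conj_cancel[OF U] A D by (metis D_def mult_carrier_mat)
  then have "d i * d i * d i = d i" if "i < n" for i
  proof -
    have "mat_diag n (\<lambda>i. complex_of_real (d i * d i * d i)) $$ (i, i) = D $$ (i, i)"
      using \<open>D * D * D = D\<close> by (simp add: D_def)
    with that show ?thesis by (simp add: D_def mat_diag_def flip: of_real_mult)
  qed
  then have "d i * (d i - 1) * (d i + 1) = 0" if "i < n" for i
    using that by (simp add: algebra_simps)
  then have "d i = 0 \<or> d i = 1 \<or> d i = -1" if "i < n" for i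
    using that by (metis add_eq_0_iff2 eq_iff_diff_eq_0 mult_eq_0_iff)
  then have "\<bar>d i\<bar> powr p = d i * d i" if "i < n" for i
    using that by fastforce
  then have "mat_diag n (\<lambda>i. complex_of_real (\<bar>d i\<bar> powr p)) = D * D"
    unfolding D_def mat_diag_diag by (intro eq_matI) (auto simp: mat_diag_def)
  with abs square show ?thesis by simp
qed

definition rank_one :: "nat \<Rightarrow> real \<Rightarrow> (nat \<Rightarrow> complex) \<Rightarrow> complex mat" where
  "rank_one n c w = mat n n (\<lambda>(i,j). complex_of_real c * w i * cnj (w j))"

lemma rank_one_carrier_mat [simp]: "rank_one n c w \<in> carrier_mat n n"
  by (simp add: rank_one_def)

lemma positive_op_rank_one:
  assumes "0 \<le> c"
  shows "positive_op n (rank_one n c w)"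
  unfolding positive_op_def self_adjoint_def
proof (intro conjI ballI)
  show "rank_one n c w \<in> carrier_mat n n" by simp
  show "cadj (rank_one n c w) = rank_one n c w"
    by (rule eq_matI) (auto simp: cadj_def rank_one_def)
  fix v :: "complex vec"
  assume v: "v \<in> carrier_vec n"
  define z where "z = (\<Sum>i<n. cnj (v $ i) * w i)"
  have "cinner v (rank_one n c w *\<^sub>v v)
      = (\<Sum>i<n. cnj (v $ i) * (\<Sum>j<n. complex_of_real c * w i * cnj (w j) * v $ j))"
    using v by (auto simp: cinner_def rank_one_def mult_mat_vec_def scalar_prod_def intro!: sum.cong)
  also have "\<dots> = complex_of_real c * z * cnj z"
    by (simp add: z_def sum_distrib_left sum_distrib_right mult_ac)
  also have "\<dots> = complex_of_real c * (z * cnj z)"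
    by (simp add: mult.assoc)
  also have "\<dots> = complex_of_real (c * ((Re z)\<^sup>2 + (Im z)\<^sup>2))"
    by (simp add: complex_mult_cnj)
  finally show "0 \<le> Re (cinner v (rank_one n c w *\<^sub>v v))"
    using assms by simp
qed

lemma transpose_rank_one: "transpose_mat (rank_one n c w) = rank_one n c (\<lambda>i. cnj (w i))"
  by (rule eq_matI) (auto simp: rank_one_def)

lemma kron_rank_one:
  "kron (rank_one n a w) (rank_one m b u)
    = rank_one (n * m) (a * b) (\<lambda>k. w (k div m) * u (k mod m))"
proof (rule eq_matI)
  fix i j
  assume "i < dim_row (rank_one (n * m) (a * b) (\<lambda>k. w (k div m) * u (k mod m)))"
    and "j < dim_col (rank_one (n * m) (a * b) (\<lambda>k. w (k div m) * u (k mod m)))"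
  then have "i < n * m" "j < n * m" by (auto simp: rank_one_def)
  then have "i div m < n" "j div m < n" "i mod m < m" "j mod m < m"
    by (auto simp: less_mult_imp_div_less mult.commute) (cases "m = 0"; simp)+
  then show "kron (rank_one n a w) (rank_one m b u) $$ (i, j)
      = rank_one (n * m) (a * b) (\<lambda>k. w (k div m) * u (k mod m)) $$ (i, j)"
    using \<open>i < n * m\<close> \<open>j < n * m\<close> by (simp add: kron_def rank_one_def mult_ac)
qed (auto simp: kron_def rank_one_def)

lemma mtrace_rank_one: "mtrace (rank_one n c w) = complex_of_real (c * (\<Sum>i<n. (cmod (w i))\<^sup>2))"
  by (simp add: mtrace_def rank_one_def sum_distrib_left mult.assoc complex_mult_cnj cmod_def)

lemma rank_one_trace_coeff_pos:
  assumes "mtrace (rank_one n c w) = 1"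
  shows "0 < c"
proof (rule ccontr)
  assume "\<not> 0 < c"
  then have "c * (\<Sum>i<n. (cmod (w i))\<^sup>2) \<le> 0"
    by (simp add: mult_nonpos_nonneg sum_nonneg)
  with assms show False
    unfolding mtrace_rank_one by (metis of_real_eq_1_iff not_one_le_zero)
qed

lemma mtrace_ptrace_dual:
  assumes "P \<in> carrier_mat (n * n) (n * n)"
  shows "mtrace (ptrace_dual n P) = mtrace P"
  using assms by (simp add: mtrace_def ptrace_dual_def sum_mult_product add.commute)

lemma ptrace_dual_kron:
  assumes "A \<in> carrier_mat n n" "B \<in> carrier_mat n n"
  shows "ptrace_dual n (kron A B) = mtrace B \<cdot>\<^sub>m A"
proof (rule eq_matI)
  fix i j
  assume "i < dim_row (mtrace B \<cdot>\<^sub>m A)" "j < dim_col (mtrace B \<cdot>\<^sub>m A)"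
  then have "i < n" "j < n" using assms by auto
  then have "(i * n + k) div n = i" "(i * n + k) mod n = k" "(j * n + k) div n = j" "(j * n + k) mod n = k"
    "i * n + k < n * n" "j * n + k < n * n" if "k < n" for k
    using that by (auto intro: mult_add_less_mult)
  then show "ptrace_dual n (kron A B) $$ (i, j) = (mtrace B \<cdot>\<^sub>m A) $$ (i, j)"
    using assms \<open>i < n\<close> \<open>j < n\<close>
    by (simp add: ptrace_dual_def kron_def mtrace_def sum_distrib_left mult.commute)
qed (use assms in \<open>auto simp: ptrace_dual_def\<close>)

lemma ptrace_primal_kron:
  assumes "A \<in> carrier_mat n n" "B \<in> carrier_mat n n"
  shows "ptrace_primal n (kron A B) = mtrace A \<cdot>\<^sub>m B"
proof (rule eq_matI)
  fix i j
  assume "i < dim_row (mtrace A \<cdot>\<^sub>m B)" "j < dim_col (mtrace A \<cdot>\<^sub>m B)"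
  then have "i < n" "j < n" using assms by auto
  then have "(k * n + i) div n = k" "(k * n + i) mod n = i" "(k * n + j) div n = k" "(k * n + j) mod n = j"
    "k * n + i < n * n" "k * n + j < n * n" if "k < n" for k
    using that by (auto intro: mult_add_less_mult)
  then show "ptrace_primal n (kron A B) $$ (i, j) = (mtrace A \<cdot>\<^sub>m B) $$ (i, j)"
    using assms \<open>i < n\<close> \<open>j < n\<close>
    by (simp add: ptrace_primal_def kron_def mtrace_def sum_distrib_right)
qed (use assms in \<open>auto simp: ptrace_primal_def\<close>)

lemma kron_pure_states_coupling:
  assumes "is_state n (rank_one n a u)" and "is_state n (rank_one n b w)"
  shows "kron (rank_one n b w) (transpose_mat (rank_one n a u))
    \<in> couplings n (rank_one n a u) (rank_one n b w)"
proof -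
  let ?\<rho> = "rank_one n a u" and ?\<omega> = "rank_one n b w"
  let ?P = "kron ?\<omega> (transpose_mat ?\<rho>)"
  have tr: "mtrace ?\<rho> = 1" "mtrace ?\<omega> = 1"
    using assms by (auto simp: is_state_def)
  have "0 \<le> b * a"
    using tr by (simp add: rank_one_trace_coeff_pos less_imp_le)
  have dual: "ptrace_dual n ?P = ?\<omega>"
    using tr by (simp add: ptrace_dual_kron mtrace_transpose[OF rank_one_carrier_mat])
  have primal: "ptrace_primal n ?P = transpose_mat ?\<rho>"
    using tr by (simp add: ptrace_primal_kron)
  have "positive_op (n * n) ?P"
    unfolding transpose_rank_one kron_rank_one using \<open>0 \<le> b * a\<close> by (rule positive_op_rank_one)
  moreover have "mtrace ?P = 1"
  proof -
    have "?P \<in> carrier_mat (n * n) (n * n)" by (simp add: kron_def rank_one_def)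
    then show ?thesis using mtrace_ptrace_dual dual tr by metis
  qed
  ultimately show ?thesis
    using dual primal by (simp add: couplings_def is_state_def)
qed

lemma positive_op_quadratic_form:
  assumes P: "positive_op n P" and ij: "i < n" "j < n"
  shows "0 \<le> s\<^sup>2 * Re (P $$ (i, i)) + t\<^sup>2 * Re (P $$ (j, j)) + 2 * s * t * Re (P $$ (i, j))"
proof -
  have Pc: "P \<in> carrier_mat n n" and "cadj P = P"
    using P by (auto simp: positive_op_def self_adjoint_def)
  then have "P $$ (j, i) = cnj (P $$ (i, j))"
    using ij by (metis (no_types, lifting) cadj_def carrier_matD index_mat(1) old.prod.case)
  then have herm: "Re (P $$ (j, i)) = Re (P $$ (i, j))" by simp
  define x where
    "x k = (if k = i then complex_of_real s else 0) + (if k = j then complex_of_real t else 0)" for k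
  define v where "v = vec n x"
  have "(\<Sum>l<n. P $$ (k, l) * x l)
      = (\<Sum>l<n. (if l = i then s * P $$ (k, i) else 0) + (if l = j then t * P $$ (k, j) else 0))" for k
    by (rule sum.cong) (auto simp: x_def algebra_simps)
  then have "cinner v (P *\<^sub>v v) = (\<Sum>k<n. cnj (x k) * (s * P $$ (k, i) + t * P $$ (k, j)))"
    using Pc ij by (simp add: cinner_def v_def mult_mat_vec_def scalar_prod_def lessThan_atLeast0 sum.distrib)
  also have "\<dots> = (\<Sum>k<n. (if k = i then s * (s * P $$ (i, i) + t * P $$ (i, j)) else 0)
      + (if k = j then t * (s * P $$ (j, i) + t * P $$ (j, j)) else 0))"
    by (rule sum.cong) (auto simp: x_def algebra_simps)
  also have "\<dots> = s * (s * P $$ (i, i) + t * P $$ (i, j)) + t * (s * P $$ (j, i) + t * P $$ (j, j))"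
    using ij by (simp add: sum.distrib)
  finally have "Re (cinner v (P *\<^sub>v v))
      = s\<^sup>2 * Re (P $$ (i, i)) + t\<^sup>2 * Re (P $$ (j, j)) + 2 * s * t * Re (P $$ (i, j))"
    using herm by (simp add: power2_eq_square algebra_simps)
  moreover have "0 \<le> Re (cinner v (P *\<^sub>v v))"
    using P by (simp add: positive_op_def v_def)
  ultimately show ?thesis by simp
qed

lemma positive_op_diag_nonneg:
  assumes "positive_op n P" "i < n"
  shows "0 \<le> Re (P $$ (i, i))"
  using positive_op_quadratic_form[OF assms assms(2), of 1 0] by simp

lemma quadratic_form_nonneg_imp_sq_le:
  fixes a b c :: real
  assumes nonneg: "\<And>s t. 0 \<le> s\<^sup>2 * a + t\<^sup>2 * b + 2 * s * t * c"
  shows "c\<^sup>2 \<le> a * b"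
proof (cases "a = 0")
  case True
  have "c = 0"
  proof (rule ccontr)
    assume "c \<noteq> 0"
    then show False
      using nonneg[of "- (b + 1) / (2 * c)" 1] True by (simp add: field_simps)
  qed
  then show ?thesis
    using nonneg[of 0 1] True by simp
next
  case False
  then have "0 < a" using nonneg[of 1 0] by simp
  moreover have "0 \<le> a * (a * b - c\<^sup>2)"
    using nonneg[of "- c" a] by (simp add: power2_eq_square algebra_simps)
  ultimately show ?thesis by (simp add: zero_le_mult_iff)
qed

lemma positive_op_offdiag_bound:
  assumes "positive_op n P" "i < n" "j < n"
  shows "(Re (P $$ (i, j)))\<^sup>2 \<le> Re (P $$ (i, i)) * Re (P $$ (j, j))"
  using positive_op_quadratic_form[OF assms] by (rule quadratic_form_nonneg_imp_sq_le)

lemma coupling_dim2_entries: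
  assumes "P \<in> couplings 2 \<rho> \<omega>"
  shows "positive_op 4 P"
    and "\<omega> $$ (0, 0) = P $$ (0, 0) + P $$ (1, 1)" "\<omega> $$ (1, 1) = P $$ (2, 2) + P $$ (3, 3)"
    and "\<omega> $$ (0, 1) = P $$ (0, 2) + P $$ (1, 3)"
    and "\<rho> $$ (0, 0) = P $$ (0, 0) + P $$ (2, 2)" "\<rho> $$ (1, 1) = P $$ (1, 1) + P $$ (3, 3)"
proof -
  have dual: "ptrace_dual 2 P = \<omega>" and primal: "ptrace_primal 2 P = transpose_mat \<rho>"
    and "is_state 4 P"
    using assms by (auto simp: couplings_def)
  then show "positive_op 4 P" by (simp add: is_state_def)
  have "dim_row \<rho> = 2" "dim_col \<rho> = 2"
    using arg_cong[OF primal, of dim_row] arg_cong[OF primal, of dim_col] by (auto simp: ptrace_primal_def)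
  then show "\<rho> $$ (0, 0) = P $$ (0, 0) + P $$ (2, 2)" "\<rho> $$ (1, 1) = P $$ (1, 1) + P $$ (3, 3)"
    using arg_cong[OF primal, of "\<lambda>M. M $$ (0, 0)"] arg_cong[OF primal, of "\<lambda>M. M $$ (1, 1)"]
    by (simp_all add: ptrace_primal_def eval_nat_numeral)
  show "\<omega> $$ (0, 0) = P $$ (0, 0) + P $$ (1, 1)" "\<omega> $$ (1, 1) = P $$ (2, 2) + P $$ (3, 3)"
    "\<omega> $$ (0, 1) = P $$ (0, 2) + P $$ (1, 3)"
    using arg_cong[OF dual, of "\<lambda>M. M $$ (0, 0)"] arg_cong[OF dual, of "\<lambda>M. M $$ (1, 1)"]
      arg_cong[OF dual, of "\<lambda>M. M $$ (0, 1)"]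
    by (simp_all add: ptrace_dual_def eval_nat_numeral)
qed

definition ot_cost ::
    "nat \<Rightarrow> complex mat list \<Rightarrow> real \<Rightarrow> complex mat \<Rightarrow> complex mat \<Rightarrow> real" where
  "ot_cost n As p \<rho> \<omega> = Inf {Re (mtrace (P * cost_op n As p)) | P. P \<in> couplings n \<rho> \<omega>}"

lemma ot_cost_eqI:
  assumes "P\<^sub>0 \<in> couplings n \<rho> \<omega>" "Re (mtrace (P\<^sub>0 * cost_op n As p)) = c"
    and "\<And>P. P \<in> couplings n \<rho> \<omega> \<Longrightarrow> c \<le> Re (mtrace (P * cost_op n As p))"
  shows "ot_cost n As p \<rho> \<omega> = c"
  unfolding ot_cost_def by (rule cInf_eq_minimum) (use assms in auto)

lemma min_inverse_times_max: "0 < p \<Longrightarrow> min (1 / p) 1 * max p 1 = (1 :: real)"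
  by (simp add: min_def max_def)

lemma d_qot_ot_cost:
  assumes "0 < p"
    and nonneg: "0 \<le> ot_cost n As p \<rho> \<omega>" "0 \<le> ot_cost n As p \<rho> \<rho>" "0 \<le> ot_cost n As p \<omega> \<omega>"
  shows "d_qot n As p \<rho> \<omega>
    = (ot_cost n As p \<rho> \<omega> - (ot_cost n As p \<rho> \<rho> + ot_cost n As p \<omega> \<omega>) / 2) powr min (1 / p) 1"
proof -
  have "D_qot n As p \<sigma> \<sigma>' powr max p 1 = ot_cost n As p \<sigma> \<sigma>'"
    if "0 \<le> ot_cost n As p \<sigma> \<sigma>'" for \<sigma> \<sigma>'
    using that min_inverse_times_max[OF \<open>0 < p\<close>]
    by (simp add: D_qot_def ot_cost_def[symmetric] powr_powr)
  with nonneg show ?thesis by (simp add: d_qot_def)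
qed

definition basis_state :: "nat \<Rightarrow> complex mat" where
  "basis_state k = rank_one 2 1 (\<lambda>i. of_bool (i = k))"

definition plus_state :: "complex mat" where
  "plus_state = rank_one 2 (1 / 2) (\<lambda>_. 1)"

lemma basis_state_entries: "i < 2 \<Longrightarrow> j < 2 \<Longrightarrow> basis_state k $$ (i, j) = of_bool (i = k \<and> j = k)"
  by (simp add: basis_state_def rank_one_def)

lemma plus_state_entries: "i < 2 \<Longrightarrow> j < 2 \<Longrightarrow> plus_state $$ (i, j) = 1 / 2"
  by (simp add: plus_state_def rank_one_def)

lemma is_state_basis_state: "k < 2 \<Longrightarrow> is_state 2 (basis_state k)"
  by (auto simp: is_state_def basis_state_def mtrace_rank_one positive_op_rank_one eval_nat_numeral)

lemma is_state_plus_state: "is_state 2 plus_state"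
  by (simp add: is_state_def plus_state_def mtrace_rank_one positive_op_rank_one)

(* Measuring basis_state 1 on both factors of e_i (x) e_j^* gives different outcomes exactly for
  the indices k = 2 i + j = 1, 2. *)
definition mismatch_proj :: "complex mat" where
  "mismatch_proj = mat_diag 4 (\<lambda>k. of_bool (k = 1 \<or> k = 2))"

lemma cost_op_basis_state_1: "cost_op 2 [basis_state 1] p = mismatch_proj"
proof -
  define e :: "nat \<Rightarrow> real" where "e k = (if k = 1 then -1 else of_bool (k = 2))" for k
  define M where "M = mat_diag 4 (\<lambda>k. complex_of_real (e k))"
  let ?K = "kron (basis_state 1) (transpose_mat (1\<^sub>m 2)) - kron (1\<^sub>m 2) (transpose_mat (basis_state 1))"
  have "?K = M"
  proof (rule eq_matI)
    fix i j
    assume "i < dim_row M" "j < dim_col M"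
    then have "i \<in> {0, 1, 2, 3}" "j \<in> {0, 1, 2, 3}" by (auto simp: M_def mat_diag_def)
    then show "?K $$ (i, j) = M $$ (i, j)"
      by (auto simp: kron_def basis_state_def rank_one_def M_def e_def mat_diag_def)
  qed (auto simp: kron_def basis_state_def rank_one_def M_def mat_diag_def)
  moreover have "abs_powr 4 M p = mismatch_proj"
  proof -
    have square: "M * M = mismatch_proj"
      unfolding M_def mismatch_proj_def mat_diag_diag
      by (auto intro!: arg_cong[where f = "mat_diag 4"] simp: e_def)
    have "unitary_mat 4 (1\<^sub>m 4)" by (simp add: unitary_mat_def cadj_one_mat)
    moreover have "M = 1\<^sub>m 4 * mat_diag 4 (\<lambda>k. complex_of_real (e k)) * cadj (1\<^sub>m 4)"
      by (simp add: cadj_one_mat M_def left_mult_one_mat[of _ 4 4] right_mult_one_mat[of _ 4 4])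
    moreover have "M * M * M = M"
      unfolding M_def mat_diag_diag by (auto intro!: arg_cong[where f = "mat_diag 4"] simp: e_def)
    ultimately have "abs_powr 4 M p = M * M" by (rule abs_powr_tripotent)
    with square show ?thesis by simp
  qed
  ultimately show ?thesis by (simp add: cost_op_def mismatch_proj_def)
qed

lemma mtrace_mult_mismatch_proj:
  "P \<in> carrier_mat 4 4 \<Longrightarrow> mtrace (P * mismatch_proj) = P $$ (1, 1) + P $$ (2, 2)"
  by (simp add: mismatch_proj_def mtrace_def mat_diag_mult_right eval_nat_numeral)

lemma mismatch_cost_ge_diag_diff:
  assumes "P \<in> couplings 2 \<rho> \<omega>"
  shows "\<bar>Re (\<omega> $$ (0, 0)) - Re (\<rho> $$ (0, 0))\<bar> \<le> Re (mtrace (P * mismatch_proj))"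
proof -
  note entries = coupling_dim2_entries[OF assms]
  have "P \<in> carrier_mat 4 4"
    using entries(1) by (simp add: positive_op_def self_adjoint_def)
  moreover have "0 \<le> Re (P $$ (1, 1))" "0 \<le> Re (P $$ (2, 2))"
    using positive_op_diag_nonneg[OF entries(1)] by simp_all
  ultimately show ?thesis
    using entries(2,5) by (simp add: mtrace_mult_mismatch_proj)
qed

(* Unlike a classical state, plus_state cannot be coupled to itself for free: the marginals
  fix the diagonal of P up to one parameter a, and the Cauchy-Schwarz bounds on the
  coherences P(0,2), P(1,3), which must add up to 1/2, force a = 1/4. *)
lemma mismatch_cost_plus_state:
  assumes "P \<in> couplings 2 plus_state plus_state"
  shows "1 / 2 \<le> Re (mtrace (P * mismatch_proj))"
proof -
  note entries = coupling_dim2_entries[OF assms]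
  have pos: "positive_op 4 P" by (fact entries(1))
  then have "P \<in> carrier_mat 4 4" by (simp add: positive_op_def self_adjoint_def)
  define a where "a = Re (P $$ (0, 0))"
  define R where "R = Re (P $$ (0, 2))"
  define S where "S = Re (P $$ (1, 3))"
  have diag: "Re (P $$ (1, 1)) = 1/2 - a" "Re (P $$ (2, 2)) = 1/2 - a" "Re (P $$ (3, 3)) = a"
    and "R + S = 1/2"
    using entries(2-6)[THEN arg_cong[where f = Re]]
    by (auto simp: plus_state_entries a_def R_def S_def)
  have "R\<^sup>2 \<le> a * (1/2 - a)" "S\<^sup>2 \<le> (1/2 - a) * a"
    using positive_op_offdiag_bound[OF pos, of 0 2] positive_op_offdiag_bound[OF pos, of 1 3] diag
    by (simp_all add: a_def R_def S_def)
  moreover have "(R + S)\<^sup>2 \<le> 2 * (R\<^sup>2 + S\<^sup>2)"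
    using sum_squares_bound[of R S] by (simp add: power2_eq_square algebra_simps)
  ultimately have "(2 * a - 1/2)\<^sup>2 \<le> 0"
    using \<open>R + S = 1/2\<close> by (simp add: power2_eq_square algebra_simps)
  then have "a = 1/4" by simp
  with diag \<open>P \<in> carrier_mat 4 4\<close> show ?thesis
    by (simp add: mtrace_mult_mismatch_proj)
qed

lemma mtrace_kron_mult_mismatch_proj:
  assumes "\<rho> \<in> carrier_mat 2 2" "\<omega> \<in> carrier_mat 2 2"
  shows "mtrace (kron \<omega> (transpose_mat \<rho>) * mismatch_proj)
    = \<omega> $$ (0, 0) * \<rho> $$ (1, 1) + \<omega> $$ (1, 1) * \<rho> $$ (0, 0)"
  using assms by (subst mtrace_mult_mismatch_proj) (auto simp: kron_def)

lemma ot_cost_pure_states_eqI: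
  assumes \<rho>: "is_state 2 \<rho>" "\<rho> = rank_one 2 a u" and \<omega>: "is_state 2 \<omega>" "\<omega> = rank_one 2 b w"
    and upper: "Re (\<omega> $$ (0, 0) * \<rho> $$ (1, 1) + \<omega> $$ (1, 1) * \<rho> $$ (0, 0)) = c"
    and lower: "\<And>P. P \<in> couplings 2 \<rho> \<omega> \<Longrightarrow> c \<le> Re (mtrace (P * mismatch_proj))"
  shows "ot_cost 2 [basis_state 1] p \<rho> \<omega> = c"
proof (rule ot_cost_eqI)
  show "kron \<omega> (transpose_mat \<rho>) \<in> couplings 2 \<rho> \<omega>"
    using kron_pure_states_coupling \<rho> \<omega> by blast
  have "\<rho> \<in> carrier_mat 2 2" "\<omega> \<in> carrier_mat 2 2"
    using \<rho>(1) \<omega>(1) by (auto simp: is_state_def positive_op_def self_adjoint_def)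
  then show "Re (mtrace (kron \<omega> (transpose_mat \<rho>) * cost_op 2 [basis_state 1] p)) = c"
    unfolding cost_op_basis_state_1 using upper by (simp add: mtrace_kron_mult_mismatch_proj)
qed (unfold cost_op_basis_state_1, fact lower)

lemma ot_cost_basis_plus_states:
  "ot_cost 2 [basis_state 1] p (basis_state 0) (basis_state 1) = 1"
  "ot_cost 2 [basis_state 1] p (basis_state 0) (basis_state 0) = 0"
  "ot_cost 2 [basis_state 1] p (basis_state 1) (basis_state 1) = 0"
  "ot_cost 2 [basis_state 1] p (basis_state 0) plus_state = 1/2"
  "ot_cost 2 [basis_state 1] p plus_state (basis_state 1) = 1/2"
  "ot_cost 2 [basis_state 1] p plus_state plus_state = 1/2"
proof -
  have states: "is_state 2 (basis_state 0)" "is_state 2 (basis_state 1)" "is_state 2 plus_state"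
    by (simp_all add: is_state_basis_state is_state_plus_state)
  note pure = basis_state_def[of 0] basis_state_def[of 1] plus_state_def
  note entries = basis_state_entries plus_state_entries
  show "ot_cost 2 [basis_state 1] p (basis_state 0) (basis_state 1) = 1"
    using mismatch_cost_ge_diag_diff[of _ "basis_state 0" "basis_state 1"]
    by (intro ot_cost_pure_states_eqI[OF states(1) pure(1) states(2) pure(2)]) (simp_all add: entries)
  show "ot_cost 2 [basis_state 1] p (basis_state 0) (basis_state 0) = 0"
    using mismatch_cost_ge_diag_diff[of _ "basis_state 0" "basis_state 0"]
    by (intro ot_cost_pure_states_eqI[OF states(1) pure(1) states(1) pure(1)]) (simp_all add: entries)
  show "ot_cost 2 [basis_state 1] p (basis_state 1) (basis_state 1) = 0"
    using mismatch_cost_ge_diag_diff[of _ "basis_state 1" "basis_state 1"]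
    by (intro ot_cost_pure_states_eqI[OF states(2) pure(2) states(2) pure(2)]) (simp_all add: entries)
  show "ot_cost 2 [basis_state 1] p (basis_state 0) plus_state = 1/2"
    using mismatch_cost_ge_diag_diff[of _ "basis_state 0" plus_state]
    by (intro ot_cost_pure_states_eqI[OF states(1) pure(1) states(3) pure(3)]) (simp_all add: entries)
  show "ot_cost 2 [basis_state 1] p plus_state (basis_state 1) = 1/2"
    using mismatch_cost_ge_diag_diff[of _ plus_state "basis_state 1"]
    by (intro ot_cost_pure_states_eqI[OF states(3) pure(3) states(2) pure(2)]) (simp_all add: entries)
  show "ot_cost 2 [basis_state 1] p plus_state plus_state = 1/2"
    using mismatch_cost_plus_state
    by (intro ot_cost_pure_states_eqI[OF states(3) pure(3) states(3) pure(3)]) (simp_all add: entries)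
qed

theorem proposition6p3:
  fixes p :: real
  assumes "0 < p" and "p < 2"
  shows "\<exists>(n::nat) (As::complex mat list) \<rho> \<tau> \<omega>.
           (\<forall>A \<in> set As. self_adjoint n A) \<and>
           is_state n \<rho> \<and> is_state n \<tau> \<and> is_state n \<omega> \<and>
           d_qot n As p \<rho> \<omega> > d_qot n As p \<rho> \<tau> + d_qot n As p \<tau> \<omega>"
proof -
  define e where "e = min (1 / p) 1"
  let ?d = "d_qot 2 [basis_state 1] p"
  have "?d (basis_state 0) (basis_state 1) = 1"
    and "?d (basis_state 0) plus_state = (1/4) powr e" "?d plus_state (basis_state 1) = (1/4) powr e"
    using d_qot_ot_cost[OF \<open>0 < p\<close>]
    by (simp_all add: ot_cost_basis_plus_states e_def del: One_nat_def)
  moreover have "(1/4 :: real) powr e < (1/4) powr (1/2)"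
    using assms by (intro powr_less_mono') (auto simp: e_def field_simps)
  then have "2 * (1/4 :: real) powr e < 1"
    by (simp add: powr_half_sqrt real_sqrt_divide)
  moreover have "self_adjoint 2 (basis_state 1)"
    using positive_op_rank_one[of 1 2] by (simp add: basis_state_def positive_op_def)
  ultimately show ?thesis
    using is_state_basis_state[of 0] is_state_basis_state[of 1] is_state_plus_state
    by (intro exI[of _ 2] exI[of _ "[basis_state 1]"] exI[of _ "basis_state 0"] exI[of _ plus_state]
        exI[of _ "basis_state 1"]) simp
qed

end
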